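(* Let $\mathcal{C},\mathcal{D}$ be categories and $F:\mathcal{C}\to\mathcal{D}$ a functor. Assume that $\mathcal{D}$ is essentially small and that there exists a cardinal $\kappa$ such that $\mathcal{C}$ has products indexed by any set of cardinality $\kappa$, while $|\mathcal{D}(d',d)|\leq\kappa$ for all objects $d',d$ of $\mathcal{D}$. Then: (1) for any two parallel morphisms $f,g:c'\to c$ in $\mathcal{C}$ we have $F(f)=F(g)$; (2) if $\mathcal{C}$ is strongly connected, then $F$ is isomorphic to a constant functor.
   Context: A category is essentially small if it is equivalent to a small category. A category is strongly connected if for any two objects $c,c'$ the hom-set $\mathcal{C}(c,c')$ is non-empty. *)

theory Defs
  imports Main
begin

record ('o, 'a) category =
  Obj  :: "'o set"
  Arr  :: "'a set"
  Dom  :: "'a \<Rightarrow> 'o"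
  Cod  :: "'a \<Rightarrow> 'o"
  Id   :: "'o \<Rightarrow> 'a"
  Comp :: "'a \<Rightarrow> 'a \<Rightarrow> 'a"   (* Comp C g f = g \<circ> f *)

definition hom :: "('o, 'a) category \<Rightarrow> 'o \<Rightarrow> 'o \<Rightarrow> 'a set" where
  "hom C x y = {f \<in> Arr C. Dom C f = x \<and> Cod C f = y}"

definition category :: "('o, 'a) category \<Rightarrow> bool" where
  "category C \<longleftrightarrow>
     (\<forall>f \<in> Arr C. Dom C f \<in> Obj C \<and> Cod C f \<in> Obj C) \<and>
     (\<forall>x \<in> Obj C. Id C x \<in> hom C x x) \<and>
     (\<forall>x \<in> Obj C. \<forall>y \<in> Obj C. \<forall>z \<in> Obj C. \<forall>f \<in> hom C x y. \<forall>g \<in> hom C y z.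
        Comp C g f \<in> hom C x z) \<and>
     (\<forall>x \<in> Obj C. \<forall>y \<in> Obj C. \<forall>f \<in> hom C x y.
        Comp C (Id C y) f = f \<and> Comp C f (Id C x) = f) \<and>
     (\<forall>w \<in> Obj C. \<forall>x \<in> Obj C. \<forall>y \<in> Obj C. \<forall>z \<in> Obj C.
        \<forall>f \<in> hom C w x. \<forall>g \<in> hom C x y. \<forall>h \<in> hom C y z.
        Comp C h (Comp C g f) = Comp C (Comp C h g) f)"

definition "functor" ::
  "('o, 'a) category \<Rightarrow> ('p, 'b) category \<Rightarrow> ('o \<Rightarrow> 'p) \<Rightarrow> ('a \<Rightarrow> 'b) \<Rightarrow> bool" where
  "functor C D Fo Fa \<longleftrightarrow> category C \<and> category D \<and>
     (\<forall>x \<in> Obj C. Fo x \<in> Obj D) \<and>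
     (\<forall>x \<in> Obj C. \<forall>y \<in> Obj C. \<forall>f \<in> hom C x y. Fa f \<in> hom D (Fo x) (Fo y)) \<and>
     (\<forall>x \<in> Obj C. Fa (Id C x) = Id D (Fo x)) \<and>
     (\<forall>x \<in> Obj C. \<forall>y \<in> Obj C. \<forall>z \<in> Obj C. \<forall>f \<in> hom C x y. \<forall>g \<in> hom C y z.
        Fa (Comp C g f) = Comp D (Fa g) (Fa f))"

definition iso_arr :: "('o, 'a) category \<Rightarrow> 'a \<Rightarrow> bool" where
  "iso_arr C f \<longleftrightarrow> f \<in> Arr C \<and>
     (\<exists>g \<in> hom C (Cod C f) (Dom C f).
        Comp C g f = Id C (Dom C f) \<and> Comp C f g = Id C (Cod C f))"

definition nat_iso ::
  "('o, 'a) category \<Rightarrow> ('p, 'b) category \<Rightarrow> ('o \<Rightarrow> 'p) \<Rightarrow> ('a \<Rightarrow> 'b)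
     \<Rightarrow> ('o \<Rightarrow> 'p) \<Rightarrow> ('a \<Rightarrow> 'b) \<Rightarrow> ('o \<Rightarrow> 'b) \<Rightarrow> bool" where
  "nat_iso C D Go Ga Ho Ha \<eta> \<longleftrightarrow>
     functor C D Go Ga \<and> functor C D Ho Ha \<and>
     (\<forall>x \<in> Obj C. \<eta> x \<in> hom D (Go x) (Ho x) \<and> iso_arr D (\<eta> x)) \<and>
     (\<forall>x \<in> Obj C. \<forall>y \<in> Obj C. \<forall>f \<in> hom C x y.
        Comp D (\<eta> y) (Ga f) = Comp D (Ha f) (\<eta> x))"

definition isomorphic_functors ::
  "('o, 'a) category \<Rightarrow> ('p, 'b) category \<Rightarrow> ('o \<Rightarrow> 'p) \<Rightarrow> ('a \<Rightarrow> 'b)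
     \<Rightarrow> ('o \<Rightarrow> 'p) \<Rightarrow> ('a \<Rightarrow> 'b) \<Rightarrow> bool" where
  "isomorphic_functors C D Go Ga Ho Ha \<longleftrightarrow> (\<exists>\<eta>. nat_iso C D Go Ga Ho Ha \<eta>)"

definition const_obj :: "'p \<Rightarrow> 'o \<Rightarrow> 'p" where
  "const_obj d = (\<lambda>_. d)"

definition const_arr :: "('p, 'b) category \<Rightarrow> 'p \<Rightarrow> 'a \<Rightarrow> 'b" where
  "const_arr D d = (\<lambda>_. Id D d)"

definition iso_to_constant_functor ::
  "('o, 'a) category \<Rightarrow> ('p, 'b) category \<Rightarrow> ('o \<Rightarrow> 'p) \<Rightarrow> ('a \<Rightarrow> 'b) \<Rightarrow> bool" where
  "iso_to_constant_functor C D Fo Fa \<longleftrightarrow>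
     (\<exists>d \<in> Obj D. isomorphic_functors C D Fo Fa (const_obj d) (const_arr D d))"

definition is_product ::
  "('o, 'a) category \<Rightarrow> 'i set \<Rightarrow> ('i \<Rightarrow> 'o) \<Rightarrow> 'o \<Rightarrow> ('i \<Rightarrow> 'a) \<Rightarrow> bool" where
  "is_product C K X P p \<longleftrightarrow> P \<in> Obj C \<and> (\<forall>i \<in> K. p i \<in> hom C P (X i)) \<and>
     (\<forall>c \<in> Obj C. \<forall>f. (\<forall>i \<in> K. f i \<in> hom C c (X i)) \<longrightarrow>
        (\<exists>!h. h \<in> hom C c P \<and> (\<forall>i \<in> K. Comp C (p i) h = f i)))"

definition has_products_indexed_by :: "('o, 'a) category \<Rightarrow> 'i set \<Rightarrow> bool" where
  "has_products_indexed_by C K \<longleftrightarrow>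
     (\<forall>X. (\<forall>i \<in> K. X i \<in> Obj C) \<longrightarrow> (\<exists>P p. is_product C K X P p))"

definition card_le :: "'x set \<Rightarrow> 'i set \<Rightarrow> bool" where
  "card_le A K \<longleftrightarrow> (\<exists>f. inj_on f A \<and> f ` A \<subseteq> K)"

definition strongly_connected :: "('o, 'a) category \<Rightarrow> bool" where
  "strongly_connected C \<longleftrightarrow> (\<forall>c \<in> Obj C. \<forall>c' \<in> Obj C. hom C c c' \<noteq> {})"

end

theory Submission
  imports Defs
begin

text \<open>
  Suppose \<open>F f \<noteq> F g\<close> for parallel \<open>f, g : c' \<rightarrow> c\<close>, and let \<open>P = c\<^sup>K\<close> be the \<open>K\<close>-th power
  of \<open>c\<close>. Each subset \<open>A \<subseteq> K\<close> gives an arrow \<open>h\<^sub>A : c' \<rightarrow> P\<close> whose components are \<open>f\<close> on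
  \<open>A\<close> and \<open>g\<close> off \<open>A\<close>; composing \<open>F h\<^sub>A\<close> with the images of the projections recovers \<open>A\<close>,
  so \<open>A \<mapsto> F h\<^sub>A\<close> embeds \<open>Pow K\<close> into \<open>D(F c', F P)\<close>, which has at most \<open>|K|\<close> elements,
  contradicting Cantor's theorem. Once \<open>F\<close> identifies parallel arrows, in a strongly
  connected category the images of arbitrary arrows \<open>x \<rightarrow> c\<^sub>0\<close> form a natural isomorphism
  from \<open>F\<close> to the constant functor at \<open>F c\<^sub>0\<close>.
\<close>

lemma not_card_le_Pow: "\<not> card_le (Pow K) K"
  using inj_on_iff_surj[of "Pow K" K] Cantors_theorem[of K] by (auto simp: card_le_def)

lemma card_le_inj_on:
  assumes "card_le B K" "inj_on f A" "f ` A \<subseteq> B"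
  shows "card_le A K"
proof -
  obtain g where "inj_on g B" "g ` B \<subseteq> K"
    using assms(1) unfolding card_le_def by blast
  then have "inj_on (g \<circ> f) A" "(g \<circ> f) ` A \<subseteq> K"
    using assms(2,3) by (auto intro: comp_inj_on inj_on_subset)
  then show ?thesis
    unfolding card_le_def by blast
qed

lemma categoryD:
  assumes "category C"
  shows "x \<in> Obj C \<Longrightarrow> Id C x \<in> hom C x x"
    and "\<lbrakk>x \<in> Obj C; y \<in> Obj C; z \<in> Obj C; f \<in> hom C x y; g \<in> hom C y z\<rbrakk>
          \<Longrightarrow> Comp C g f \<in> hom C x z"
    and "\<lbrakk>x \<in> Obj C; y \<in> Obj C; f \<in> hom C x y\<rbrakk> \<Longrightarrow> Comp C (Id C y) f = f"
  using assms unfolding category_def by simp_all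

lemma functorD:
  assumes "functor C D Fo Fa"
  shows "category C" and "category D"
    and "x \<in> Obj C \<Longrightarrow> Fo x \<in> Obj D"
    and "\<lbrakk>x \<in> Obj C; y \<in> Obj C; f \<in> hom C x y\<rbrakk> \<Longrightarrow> Fa f \<in> hom D (Fo x) (Fo y)"
    and "x \<in> Obj C \<Longrightarrow> Fa (Id C x) = Id D (Fo x)"
    and "\<lbrakk>x \<in> Obj C; y \<in> Obj C; z \<in> Obj C; f \<in> hom C x y; g \<in> hom C y z\<rbrakk>
          \<Longrightarrow> Fa (Comp C g f) = Comp D (Fa g) (Fa f)"
  using assms unfolding functor_def by simp_all

lemma is_product_induced_arrow:
  assumes "is_product C K X P p" "c \<in> Obj C" "\<forall>i \<in> K. f i \<in> hom C c (X i)"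
  shows "\<exists>h. h \<in> hom C c P \<and> (\<forall>i \<in> K. Comp C (p i) h = f i)"
  using assms unfolding is_product_def by blast

lemma functor_eq_on_parallel_arrows_if_power:
  assumes F: "functor C D Fo Fa"
    and power: "is_product C K (\<lambda>_. c) P p"
    and small: "card_le (hom D (Fo c') (Fo P)) K"
    and c': "c' \<in> Obj C" and c: "c \<in> Obj C"
    and f: "f \<in> hom C c' c" and g: "g \<in> hom C c' c"
  shows "Fa f = Fa g"
proof (rule ccontr)
  assume ne: "Fa f \<noteq> Fa g"
  have P: "P \<in> Obj C" and proj: "\<And>i. i \<in> K \<Longrightarrow> p i \<in> hom C P c"
    using power unfolding is_product_def by auto
  have "\<exists>h. h \<in> hom C c' P \<and> (\<forall>i \<in> K. Comp C (p i) h = (if i \<in> A then f else g))" for A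
    using is_product_induced_arrow[OF power c'] f g by simp
  then obtain h where h: "\<And>A. h A \<in> hom C c' P"
    and h_proj: "\<And>A i. i \<in> K \<Longrightarrow> Comp C (p i) (h A) = (if i \<in> A then f else g)"
    by metis
  have F_h_proj: "Comp D (Fa (p i)) (Fa (h A)) = (if i \<in> A then Fa f else Fa g)"
    if "i \<in> K" for A i
    using functorD(6)[OF F c' P c h[of A] proj[OF that]] h_proj[OF that, of A]
    by (cases "i \<in> A") simp_all
  have "inj_on (\<lambda>A. Fa (h A)) (Pow K)"
  proof (rule inj_onI)
    fix A B assume A: "A \<in> Pow K" and B: "B \<in> Pow K" and eq: "Fa (h A) = Fa (h B)"
    have "i \<in> A \<longleftrightarrow> i \<in> B" if "i \<in> K" for i
      using F_h_proj[OF that, of A] F_h_proj[OF that, of B] eq ne by (auto split: if_splits)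
    then show "A = B"
      using A B by blast
  qed
  moreover have "(\<lambda>A. Fa (h A)) ` Pow K \<subseteq> hom D (Fo c') (Fo P)"
    using functorD(4)[OF F c' P h] by blast
  ultimately have "card_le (Pow K) K"
    using card_le_inj_on[OF small] by blast
  then show False
    using not_card_le_Pow by blast
qed

lemma functor_const:
  assumes "category C" "category D" "d \<in> Obj D"
  shows "functor C D (const_obj d) (const_arr D d)"
  using assms categoryD(3)[OF assms(2) assms(3) assms(3) categoryD(1)[OF assms(2,3)]]
    categoryD(1)[OF assms(2)]
  unfolding functor_def const_obj_def const_arr_def by simp

lemma iso_arrI:
  assumes "f \<in> hom C x y" "g \<in> hom C y x"
    and "Comp C g f = Id C x" "Comp C f g = Id C y"
  shows "iso_arr C f"
  using assms unfolding iso_arr_def hom_def by auto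

lemma iso_to_constant_functor_if_eq_on_parallel_arrows:
  assumes F: "functor C D Fo Fa"
    and sc: "strongly_connected C" and c0: "c0 \<in> Obj C"
    and parallel: "\<And>x y f g. \<lbrakk>x \<in> Obj C; y \<in> Obj C; f \<in> hom C x y; g \<in> hom C x y\<rbrakk>
                      \<Longrightarrow> Fa f = Fa g"
  shows "iso_to_constant_functor C D Fo Fa"
proof -
  have C: "category C" and D: "category D"
    using functorD(1,2)[OF F] .
  define d where "d = Fo c0"
  have d: "d \<in> Obj D"
    unfolding d_def using functorD(3)[OF F c0] .
  have "\<forall>x \<in> Obj C. \<exists>a. a \<in> hom C x c0" "\<forall>x \<in> Obj C. \<exists>a. a \<in> hom C c0 x"
    using sc c0 unfolding strongly_connected_def by blast+
  then obtain u v where u: "\<And>x. x \<in> Obj C \<Longrightarrow> u x \<in> hom C x c0"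
    and v: "\<And>x. x \<in> Obj C \<Longrightarrow> v x \<in> hom C c0 x"
    by (metis bchoice)
  define \<eta> where "\<eta> x = Fa (u x)" for x
  have \<eta>: "\<eta> x \<in> hom D (Fo x) d" if "x \<in> Obj C" for x
    unfolding \<eta>_def d_def using functorD(4)[OF F that c0 u[OF that]] .
  have "Comp D (Fa (v x)) (\<eta> x) = Id D (Fo x)" if x: "x \<in> Obj C" for x
  proof -
    have "Comp D (Fa (v x)) (\<eta> x) = Fa (Comp C (v x) (u x))"
      unfolding \<eta>_def using functorD(6)[OF F x c0 x u[OF x] v[OF x]] by simp
    also have "\<dots> = Fa (Id C x)"
      using parallel[OF x x categoryD(2)[OF C x c0 x u[OF x] v[OF x]] categoryD(1)[OF C x]] .
    finally show ?thesis
      using functorD(5)[OF F x] by simp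
  qed
  moreover have "Comp D (\<eta> x) (Fa (v x)) = Id D d" if x: "x \<in> Obj C" for x
  proof -
    have "Comp D (\<eta> x) (Fa (v x)) = Fa (Comp C (u x) (v x))"
      unfolding \<eta>_def using functorD(6)[OF F c0 x c0 v[OF x] u[OF x]] by simp
    also have "\<dots> = Fa (Id C c0)"
      using parallel[OF c0 c0 categoryD(2)[OF C c0 x c0 v[OF x] u[OF x]] categoryD(1)[OF C c0]] .
    finally show ?thesis
      unfolding d_def using functorD(5)[OF F c0] by simp
  qed
  ultimately have iso: "iso_arr D (\<eta> x)" if "x \<in> Obj C" for x
    using iso_arrI[OF \<eta>] functorD(4)[OF F c0 _ v] that unfolding d_def by blast
  have natural: "Comp D (\<eta> y) (Fa f) = Comp D (Id D d) (\<eta> x)"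
    if x: "x \<in> Obj C" and y: "y \<in> Obj C" and f: "f \<in> hom C x y" for x y f
  proof -
    have "Comp D (\<eta> y) (Fa f) = Fa (Comp C (u y) f)"
      unfolding \<eta>_def using functorD(6)[OF F x y c0 f u[OF y]] by simp
    also have "\<dots> = \<eta> x"
      unfolding \<eta>_def using parallel[OF x c0 categoryD(2)[OF C x y c0 f u[OF y]] u[OF x]] .
    finally show ?thesis
      using categoryD(3)[OF D functorD(3)[OF F x] d \<eta>[OF x]] by simp
  qed
  have "nat_iso C D Fo Fa (const_obj d) (const_arr D d) \<eta>"
    unfolding nat_iso_def using F functor_const[OF C D d] \<eta> iso natural
    by (simp add: const_obj_def const_arr_def)
  then show ?thesis
    unfolding iso_to_constant_functor_def isomorphic_functors_def using d by blast
qed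

theorem theorem2p3:
  fixes C :: "('o, 'a) category" and D :: "('p, 'b) category"
    and Fo :: "'o \<Rightarrow> 'p" and Fa :: "'a \<Rightarrow> 'b"
    and K :: "'i set"
  assumes F: "functor C D Fo Fa"
    and prod: "\<And>J :: 'i set. (\<exists>h. bij_betw h J K) \<Longrightarrow> has_products_indexed_by C J"
    and homs: "\<And>d' d. d' \<in> Obj D \<Longrightarrow> d \<in> Obj D \<Longrightarrow> card_le (hom D d' d) K"
  shows "(\<forall>c' \<in> Obj C. \<forall>c \<in> Obj C. \<forall>f \<in> hom C c' c. \<forall>g \<in> hom C c' c. Fa f = Fa g)
       \<and> (strongly_connected C \<and> Obj C \<noteq> {} \<longrightarrow> iso_to_constant_functor C D Fo Fa)"
proof -
  have K_products: "has_products_indexed_by C K"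
    using prod bij_betw_id by blast
  have parallel: "Fa f = Fa g"
    if c': "c' \<in> Obj C" and c: "c \<in> Obj C" and "f \<in> hom C c' c" "g \<in> hom C c' c"
    for c' c f g
  proof -
    obtain P p where power: "is_product C K (\<lambda>_. c) P p"
      using K_products c unfolding has_products_indexed_by_def by metis
    then have "P \<in> Obj C"
      unfolding is_product_def by blast
    then have "card_le (hom D (Fo c') (Fo P)) K"
      using homs functorD(3)[OF F] c' by blast
    then show ?thesis
      using functor_eq_on_parallel_arrows_if_power[OF F power] that by blast
  qed
  moreover have "iso_to_constant_functor C D Fo Fa"
    if "strongly_connected C" "c0 \<in> Obj C" for c0
    using iso_to_constant_functor_if_eq_on_parallel_arrows[OF F that] parallel by blast
  ultimately show ?thesis
    by blast
qed

end
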